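(* Let $\mathcal{A}$ be an abelian category with an amplitude $\alpha$. Then for all $A,B\in\operatorname{ob}\mathcal{A}$, \[ |\alpha(A)-\alpha(B)|\le\mathrm{d}_\alpha(A,B), \] i.e. $\alpha$ is $1$-Lipschitz with respect to the path metric $\mathrm{d}_\alpha$.
   Context: An amplitude on an abelian category $\mathcal{A}$ is a function $\alpha\colon\operatorname{ob}\mathcal{A}\to[0,\infty]$ with $\alpha(0)=0$ such that for every short exact sequence $0\to A\to B\to C\to0$, $\alpha(A)\le\alpha(B)$, $\alpha(C)\le\alpha(B)$ and $\alpha(B)\le\alpha(A)+\alpha(C)$. The cost of a zigzag $A\xleftarrow{\gamma_1}C_1\xrightarrow{\gamma_2}\cdots\xleftarrow{\gamma_{n-1}}C_n\xrightarrow{\gamma_n}B$ is $\sum_i\alpha(\ker\gamma_i)+\alpha(\operatorname{coker}\gamma_i)$; the path metric $\mathrm{d}_\alpha(A,B)$ is the infimum of costs over all zigzags between $A$ and $B$ ($\inf\emptyset=\infty$). *)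

theory Defs
  imports "HOL-Library.Extended_Real"
begin

text \<open>A category whose objects are all elements of type 'o and whose morphisms are all
  elements of type 'm, with domain, codomain, identities and composition
  (ccomp C g f is g after f, meaningful when ccod C f = cdom C g).\<close>

record ('o, 'm) cat =
  cdom  :: "'m \<Rightarrow> 'o"
  ccod  :: "'m \<Rightarrow> 'o"
  cid   :: "'o \<Rightarrow> 'm"
  ccomp :: "'m \<Rightarrow> 'm \<Rightarrow> 'm"

definition category :: "('o, 'm) cat \<Rightarrow> bool" where
  "category C \<longleftrightarrow>
     (\<forall>a. cdom C (cid C a) = a \<and> ccod C (cid C a) = a) \<and>
     (\<forall>f g. cdom C g = ccod C f \<longrightarrow>
        cdom C (ccomp C g f) = cdom C f \<and> ccod C (ccomp C g f) = ccod C g) \<and>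
     (\<forall>f. ccomp C f (cid C (cdom C f)) = f \<and> ccomp C (cid C (ccod C f)) f = f) \<and>
     (\<forall>f g h. cdom C g = ccod C f \<and> cdom C h = ccod C g \<longrightarrow>
        ccomp C h (ccomp C g f) = ccomp C (ccomp C h g) f)"

definition is_zero_obj :: "('o, 'm) cat \<Rightarrow> 'o \<Rightarrow> bool" where
  "is_zero_obj C z \<longleftrightarrow>
     (\<forall>a. \<exists>!f. cdom C f = z \<and> ccod C f = a) \<and>
     (\<forall>a. \<exists>!f. cdom C f = a \<and> ccod C f = z)"

definition zero_mor :: "('o, 'm) cat \<Rightarrow> 'm \<Rightarrow> bool" where
  "zero_mor C f \<longleftrightarrow>
     (\<exists>z u v. is_zero_obj C z \<and> cdom C u = cdom C f \<and> ccod C u = z \<and>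
              cdom C v = z \<and> ccod C v = ccod C f \<and> f = ccomp C v u)"

definition is_kernel :: "('o, 'm) cat \<Rightarrow> 'm \<Rightarrow> 'm \<Rightarrow> bool" where
  "is_kernel C k f \<longleftrightarrow>
     ccod C k = cdom C f \<and> zero_mor C (ccomp C f k) \<and>
     (\<forall>h. ccod C h = cdom C f \<and> zero_mor C (ccomp C f h) \<longrightarrow>
        (\<exists>!u. cdom C u = cdom C h \<and> ccod C u = cdom C k \<and> ccomp C k u = h))"

definition is_cokernel :: "('o, 'm) cat \<Rightarrow> 'm \<Rightarrow> 'm \<Rightarrow> bool" where
  "is_cokernel C q f \<longleftrightarrow>
     cdom C q = ccod C f \<and> zero_mor C (ccomp C q f) \<and>
     (\<forall>h. cdom C h = ccod C f \<and> zero_mor C (ccomp C h f) \<longrightarrow>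
        (\<exists>!u. cdom C u = ccod C q \<and> ccod C u = ccod C h \<and> ccomp C u q = h))"

definition mono :: "('o, 'm) cat \<Rightarrow> 'm \<Rightarrow> bool" where
  "mono C f \<longleftrightarrow>
     (\<forall>g h. ccod C g = cdom C f \<and> ccod C h = cdom C f \<and> cdom C g = cdom C h \<and>
        ccomp C f g = ccomp C f h \<longrightarrow> g = h)"

definition epi :: "('o, 'm) cat \<Rightarrow> 'm \<Rightarrow> bool" where
  "epi C f \<longleftrightarrow>
     (\<forall>g h. cdom C g = ccod C f \<and> cdom C h = ccod C f \<and> ccod C g = ccod C h \<and>
        ccomp C g f = ccomp C h f \<longrightarrow> g = h)"

definition has_product :: "('o, 'm) cat \<Rightarrow> 'o \<Rightarrow> 'o \<Rightarrow> bool" where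
  "has_product C a b \<longleftrightarrow>
     (\<exists>p p1 p2. cdom C p1 = p \<and> ccod C p1 = a \<and> cdom C p2 = p \<and> ccod C p2 = b \<and>
        (\<forall>f g. cdom C f = cdom C g \<and> ccod C f = a \<and> ccod C g = b \<longrightarrow>
           (\<exists>!u. cdom C u = cdom C f \<and> ccod C u = p \<and>
                 ccomp C p1 u = f \<and> ccomp C p2 u = g)))"

definition has_coproduct :: "('o, 'm) cat \<Rightarrow> 'o \<Rightarrow> 'o \<Rightarrow> bool" where
  "has_coproduct C a b \<longleftrightarrow>
     (\<exists>p i1 i2. ccod C i1 = p \<and> cdom C i1 = a \<and> ccod C i2 = p \<and> cdom C i2 = b \<and>
        (\<forall>f g. ccod C f = ccod C g \<and> cdom C f = a \<and> cdom C g = b \<longrightarrow>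
           (\<exists>!u. ccod C u = ccod C f \<and> cdom C u = p \<and>
                 ccomp C u i1 = f \<and> ccomp C u i2 = g)))"

definition abelian_category :: "('o, 'm) cat \<Rightarrow> bool" where
  "abelian_category C \<longleftrightarrow>
     category C \<and> (\<exists>z. is_zero_obj C z) \<and>
     (\<forall>a b. has_product C a b \<and> has_coproduct C a b) \<and>
     (\<forall>f. \<exists>k. is_kernel C k f) \<and> (\<forall>f. \<exists>q. is_cokernel C q f) \<and>
     (\<forall>f. mono C f \<longrightarrow> (\<exists>g. is_kernel C f g)) \<and>
     (\<forall>f. epi C f \<longrightarrow> (\<exists>g. is_cokernel C f g))"

definition short_exact :: "('o, 'm) cat \<Rightarrow> 'm \<Rightarrow> 'm \<Rightarrow> bool" where
  "short_exact C f g \<longleftrightarrow> is_kernel C f g \<and> is_cokernel C g f"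

definition amplitude :: "('o, 'm) cat \<Rightarrow> ('o \<Rightarrow> ereal) \<Rightarrow> bool" where
  "amplitude C \<alpha> \<longleftrightarrow>
     (\<forall>a. 0 \<le> \<alpha> a) \<and>
     (\<forall>z. is_zero_obj C z \<longrightarrow> \<alpha> z = 0) \<and>
     (\<forall>f g. short_exact C f g \<longrightarrow>
        \<alpha> (cdom C f) \<le> \<alpha> (cdom C g) \<and> \<alpha> (ccod C g) \<le> \<alpha> (cdom C g) \<and>
        \<alpha> (cdom C g) \<le> \<alpha> (cdom C f) + \<alpha> (ccod C g))"

text \<open>The kernel / cokernel object of a morphism (a chosen one; well defined up to iso).\<close>
definition ker_obj :: "('o, 'm) cat \<Rightarrow> 'm \<Rightarrow> 'o" where
  "ker_obj C f = cdom C (SOME k. is_kernel C k f)"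

definition coker_obj :: "('o, 'm) cat \<Rightarrow> 'm \<Rightarrow> 'o" where
  "coker_obj C f = ccod C (SOME q. is_cokernel C q f)"

text \<open>A zigzag from A to B: a list of morphisms, each tagged True if it points forward
  (from the current object) and False if it points backward (into the current object).\<close>
fun zigzag :: "('o, 'm) cat \<Rightarrow> 'o \<Rightarrow> (bool \<times> 'm) list \<Rightarrow> 'o \<Rightarrow> bool" where
  "zigzag C A [] B \<longleftrightarrow> A = B"
| "zigzag C A ((True, g) # gs) B \<longleftrightarrow> cdom C g = A \<and> zigzag C (ccod C g) gs B"
| "zigzag C A ((False, g) # gs) B \<longleftrightarrow> ccod C g = A \<and> zigzag C (cdom C g) gs B"

definition zz_cost :: "('o, 'm) cat \<Rightarrow> ('o \<Rightarrow> ereal) \<Rightarrow> (bool \<times> 'm) list \<Rightarrow> ereal" where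
  "zz_cost C \<alpha> gs = sum_list (map (\<lambda>(_, g). \<alpha> (ker_obj C g) + \<alpha> (coker_obj C g)) gs)"

text \<open>Path metric: infimum of costs of zigzags (Inf of the empty set is \<infinity>).\<close>
definition path_dist :: "('o, 'm) cat \<Rightarrow> ('o \<Rightarrow> ereal) \<Rightarrow> 'o \<Rightarrow> 'o \<Rightarrow> ereal" where
  "path_dist C \<alpha> A B = Inf {zz_cost C \<alpha> gs | gs. zigzag C A gs B}"

end

theory Submission
  imports Defs
begin

(* Every morphism f : A -> B factors as A -> I -> B through its image I = ker (coker f),
   giving short exact sequences 0 -> ker f -> A -> I -> 0 and 0 -> I -> B -> coker f -> 0.
   The amplitude axioms turn these into |alpha A - alpha B| <= alpha (ker f) + alpha (coker f);
   summing along a zigzag and passing to the infimum gives the theorem.  The only genuinely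
   categorical point is that A -> I is epi; with Freyd's axioms this goes through equalizers,
   which are kernels of sigma o <y1, y2> for a morphism sigma whose kernel is the diagonal. *)

locale cat_laws =
  fixes C :: "('o, 'm) cat"
  assumes category: "category C"
begin

lemma dom_id [simp]: "cdom C (cid C a) = a"
  and cod_id [simp]: "ccod C (cid C a) = a"
  using category unfolding category_def by blast+

lemma dom_comp [simp]: "cdom C g = ccod C f \<Longrightarrow> cdom C (ccomp C g f) = cdom C f"
  and cod_comp [simp]: "cdom C g = ccod C f \<Longrightarrow> ccod C (ccomp C g f) = ccod C g"
  using category unfolding category_def by blast+

lemma comp_id: "cdom C f = a \<Longrightarrow> ccomp C f (cid C a) = f"
  and id_comp: "ccod C f = a \<Longrightarrow> ccomp C (cid C a) f = f"
  using category unfolding category_def by blast+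

lemma comp_assoc:
  "ccod C f = cdom C g \<Longrightarrow> ccod C g = cdom C h \<Longrightarrow>
   ccomp C h (ccomp C g f) = ccomp C (ccomp C h g) f"
  using category unfolding category_def by (metis (no_types))

lemma zero_mor_precomp:
  assumes "zero_mor C f" "ccod C h = cdom C f"
  shows "zero_mor C (ccomp C f h)"
proof -
  obtain z u v where z: "is_zero_obj C z" "cdom C u = cdom C f" "ccod C u = z"
    "cdom C v = z" "ccod C v = ccod C f" and f: "f = ccomp C v u"
    using assms(1) unfolding zero_mor_def by blast
  have "ccomp C f h = ccomp C v (ccomp C u h)"
    using z assms(2) unfolding f by (simp add: comp_assoc)
  with z assms(2) show ?thesis
    unfolding zero_mor_def f by (intro exI[of _ z] exI[of _ "ccomp C u h"] exI[of _ v]) simp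
qed

lemma zero_mor_postcomp:
  assumes "zero_mor C f" "cdom C g = ccod C f"
  shows "zero_mor C (ccomp C g f)"
proof -
  obtain z u v where z: "is_zero_obj C z" "cdom C u = cdom C f" "ccod C u = z"
    "cdom C v = z" "ccod C v = ccod C f" and f: "f = ccomp C v u"
    using assms(1) unfolding zero_mor_def by blast
  have "ccomp C g f = ccomp C (ccomp C g v) u"
    using z assms(2) unfolding f by (simp add: comp_assoc)
  with z assms(2) show ?thesis
    unfolding zero_mor_def f by (intro exI[of _ z] exI[of _ u] exI[of _ "ccomp C g v"]) simp
qed

lemma monoD:
  assumes "Defs.mono C m" "ccod C g = cdom C m" "ccod C h = cdom C m" "cdom C g = cdom C h"
    "ccomp C m g = ccomp C m h"
  shows "g = h"
  using assms unfolding Defs.mono_def by blast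

lemma mono_cancel_zero_mor:
  assumes m: "Defs.mono C m" and x: "ccod C x = cdom C m" and zero: "zero_mor C (ccomp C m x)"
  shows "zero_mor C x"
proof -
  obtain z u v where z: "is_zero_obj C z" "cdom C u = cdom C x" "ccod C u = z"
    "cdom C v = z" "ccod C v = ccod C m" and mx: "ccomp C m x = ccomp C v u"
    using zero x unfolding zero_mor_def by auto
  obtain v' where v': "cdom C v' = z" "ccod C v' = ccod C x"
    using z(1) unfolding is_zero_obj_def by blast
  have "ccomp C m v' = v"
    using z v' x is_zero_obj_def[of C z] by (metis dom_comp cod_comp)
  then have "ccomp C m (ccomp C v' u) = ccomp C m x"
    using v' x z mx by (simp add: comp_assoc)
  with m v' x z have "ccomp C v' u = x"
    unfolding Defs.mono_def by (metis dom_comp cod_comp)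
  with z v' show ?thesis unfolding zero_mor_def by metis
qed

lemma mono_comp:
  assumes "Defs.mono C a" "Defs.mono C b" "cdom C a = ccod C b"
  shows "Defs.mono C (ccomp C a b)"
  unfolding Defs.mono_def
proof (intro allI impI)
  fix g h
  assume gh: "ccod C g = cdom C (ccomp C a b) \<and> ccod C h = cdom C (ccomp C a b) \<and>
     cdom C g = cdom C h \<and> ccomp C (ccomp C a b) g = ccomp C (ccomp C a b) h"
  then have "ccomp C a (ccomp C b g) = ccomp C a (ccomp C b h)"
    using assms(3) by (simp add: comp_assoc)
  with assms gh have "ccomp C b g = ccomp C b h"
    unfolding Defs.mono_def by (metis dom_comp cod_comp)
  with assms gh show "g = h" unfolding Defs.mono_def by (metis dom_comp)
qed

lemma split_mono:
  assumes "ccod C s = cdom C r" "ccomp C r s = cid C (cdom C s)"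
  shows "Defs.mono C s"
  unfolding Defs.mono_def
proof (intro allI impI)
  fix g h
  assume gh: "ccod C g = cdom C s \<and> ccod C h = cdom C s \<and> cdom C g = cdom C h \<and>
    ccomp C s g = ccomp C s h"
  then have "ccomp C (ccomp C r s) g = ccomp C (ccomp C r s) h"
    using assms(1) by (metis comp_assoc)
  with gh assms(2) show "g = h" by (metis id_comp)
qed

lemma is_kernelD:
  assumes "is_kernel C k f"
  shows "ccod C k = cdom C f" "zero_mor C (ccomp C f k)"
    and "ccod C h = cdom C f \<Longrightarrow> zero_mor C (ccomp C f h) \<Longrightarrow>
      \<exists>u. cdom C u = cdom C h \<and> ccod C u = cdom C k \<and> ccomp C k u = h"
  using assms unfolding is_kernel_def by blast+

lemma is_cokernelD:
  assumes "is_cokernel C q f"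
  shows "cdom C q = ccod C f" "zero_mor C (ccomp C q f)"
    and "cdom C h = ccod C f \<Longrightarrow> zero_mor C (ccomp C h f) \<Longrightarrow>
      \<exists>u. cdom C u = ccod C q \<and> ccod C u = ccod C h \<and> ccomp C u q = h"
  using assms unfolding is_cokernel_def by blast+

lemma kernel_is_mono:
  assumes k: "is_kernel C k f"
  shows "Defs.mono C k"
  unfolding Defs.mono_def
proof (intro allI impI)
  fix g h
  assume gh: "ccod C g = cdom C k \<and> ccod C h = cdom C k \<and> cdom C g = cdom C h \<and>
    ccomp C k g = ccomp C k h"
  have "ccomp C f (ccomp C k g) = ccomp C (ccomp C f k) g"
    using gh is_kernelD(1)[OF k] by (metis comp_assoc)
  then have "zero_mor C (ccomp C f (ccomp C k g))"
    using gh is_kernelD(1,2)[OF k] by (simp add: zero_mor_precomp)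
  moreover have "ccod C (ccomp C k g) = cdom C f"
    using gh is_kernelD(1)[OF k] by simp
  ultimately have "\<exists>!u. cdom C u = cdom C (ccomp C k g) \<and> ccod C u = cdom C k \<and>
      ccomp C k u = ccomp C k g"
    using k unfolding is_kernel_def by blast
  with gh show "g = h" by (metis dom_comp)
qed

lemma is_kernel_of_first_factor:
  assumes k: "is_kernel C k f" and f: "f = ccomp C m e" "ccod C e = cdom C m"
    and ek: "zero_mor C (ccomp C e k)"
  shows "is_kernel C k e"
  unfolding is_kernel_def
proof (intro conjI allI impI)
  show "ccod C k = cdom C e" using is_kernelD(1)[OF k] f by simp
  show "zero_mor C (ccomp C e k)" by (fact ek)
  fix h
  assume h: "ccod C h = cdom C e \<and> zero_mor C (ccomp C e h)"
  then have "zero_mor C (ccomp C f h)"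
    using f zero_mor_postcomp[of "ccomp C e h" m] by (simp add: comp_assoc)
  with k h f show "\<exists>!u. cdom C u = cdom C h \<and> ccod C u = cdom C k \<and> ccomp C k u = h"
    unfolding is_kernel_def by simp
qed

lemma is_cokernel_of_second_factor:
  assumes q: "is_cokernel C q f" and f: "f = ccomp C m e" "ccod C e = cdom C m"
    and qm: "zero_mor C (ccomp C q m)"
  shows "is_cokernel C q m"
  unfolding is_cokernel_def
proof (intro conjI allI impI)
  show "cdom C q = ccod C m" using is_cokernelD(1)[OF q] f by simp
  show "zero_mor C (ccomp C q m)" by (fact qm)
  fix h
  assume h: "cdom C h = ccod C m \<and> zero_mor C (ccomp C h m)"
  then have "zero_mor C (ccomp C h f)"
    using f zero_mor_precomp[of "ccomp C h m" e] by (simp add: comp_assoc)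
  with q h f show "\<exists>!u. cdom C u = ccod C q \<and> ccod C u = ccod C h \<and> ccomp C u q = h"
    unfolding is_cokernel_def by simp
qed

end

locale abelian_cat =
  fixes C :: "('o, 'm) cat"
  assumes abelian: "abelian_category C"
begin

sublocale cat_laws
  using abelian unfolding abelian_category_def by unfold_locales blast

lemma kernel_exists: "\<exists>k. is_kernel C k f"
  and cokernel_exists: "\<exists>q. is_cokernel C q f"
  and mono_is_kernel: "Defs.mono C m \<Longrightarrow> \<exists>g. is_kernel C m g"
  and epi_is_cokernel: "epi C e \<Longrightarrow> \<exists>g. is_cokernel C e g"
  using abelian unfolding abelian_category_def by blast+

lemma epi_is_cokernel_of_kernel:
  assumes e: "epi C e" and k: "is_kernel C k e"
  shows "is_cokernel C e k"
  unfolding is_cokernel_def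
proof (intro conjI allI impI)
  obtain g where g: "is_cokernel C e g" using epi_is_cokernel[OF e] ..
  obtain u where u: "ccod C u = cdom C k" "ccomp C k u = g"
    using is_kernelD(3)[OF k, of g] is_cokernelD(1,2)[OF g] by metis
  show "cdom C e = ccod C k" "zero_mor C (ccomp C e k)" using is_kernelD(1,2)[OF k] by simp_all
  fix h
  assume h: "cdom C h = ccod C k \<and> zero_mor C (ccomp C h k)"
  have "ccomp C h g = ccomp C (ccomp C h k) u"
    using comp_assoc[of u k h] u h by simp
  then have "zero_mor C (ccomp C h g)"
    using h u zero_mor_precomp[of "ccomp C h k" u] by simp
  moreover have "cdom C h = ccod C g" using h u is_kernelD(1)[OF k] is_cokernelD(1)[OF g] by simp
  ultimately show "\<exists>!u. cdom C u = ccod C e \<and> ccod C u = ccod C h \<and> ccomp C u e = h"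
    using g unfolding is_cokernel_def by blast
qed

lemma equalizer_exists:
  assumes y: "cdom C y1 = I" "ccod C y1 = Z" "cdom C y2 = I" "ccod C y2 = Z"
  obtains k where "ccod C k = I" "Defs.mono C k" "ccomp C y1 k = ccomp C y2 k"
    "\<And>h. ccod C h = I \<Longrightarrow> ccomp C y1 h = ccomp C y2 h \<Longrightarrow>
      \<exists>u. ccod C u = cdom C k \<and> ccomp C k u = h"
proof -
  have "has_product C Z Z" using abelian unfolding abelian_category_def by blast
  then obtain P p1 p2 where p: "cdom C p1 = P" "ccod C p1 = Z" "cdom C p2 = P" "ccod C p2 = Z"
    and pairing: "\<forall>f g. cdom C f = cdom C g \<and> ccod C f = Z \<and> ccod C g = Z \<longrightarrow>
      (\<exists>!u. cdom C u = cdom C f \<and> ccod C u = P \<and> ccomp C p1 u = f \<and> ccomp C p2 u = g)"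
    unfolding has_product_def by blast
  obtain D where D: "cdom C D = Z" "ccod C D = P" "ccomp C p1 D = cid C Z" "ccomp C p2 D = cid C Z"
    using pairing[rule_format, of "cid C Z" "cid C Z"] by auto
  have "Defs.mono C D" by (rule split_mono[of D p1]) (simp_all add: D p)
  then obtain \<sigma> where \<sigma>: "is_kernel C D \<sigma>" using mono_is_kernel by blast
  obtain d where d: "cdom C d = I" "ccod C d = P" "ccomp C p1 d = y1" "ccomp C p2 d = y2"
    using pairing[rule_format, of y1 y2] y by auto
  define s where "s = ccomp C \<sigma> d"
  have \<sigma>_dom: "cdom C \<sigma> = P" using is_kernelD(1)[OF \<sigma>] D by simp
  have s_dom: "cdom C s = I" unfolding s_def using d \<sigma>_dom by simp
  have equalizes_iff: "ccomp C y1 h = ccomp C y2 h \<longleftrightarrow> zero_mor C (ccomp C s h)"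
    if h: "ccod C h = I" for h
  proof
    assume eq: "ccomp C y1 h = ccomp C y2 h"
    have "ccomp C d h = ccomp C D (ccomp C y1 h)"
    proof -
      have "\<exists>!u. cdom C u = cdom C h \<and> ccod C u = P \<and>
          ccomp C p1 u = ccomp C y1 h \<and> ccomp C p2 u = ccomp C y2 h"
        using pairing[rule_format, of "ccomp C y1 h" "ccomp C y2 h"] y h by simp
      moreover have "ccomp C p1 (ccomp C d h) = ccomp C y1 h"
        "ccomp C p2 (ccomp C d h) = ccomp C y2 h"
        using d h p by (simp_all add: comp_assoc)
      moreover have "ccomp C p1 (ccomp C D (ccomp C y1 h)) = ccomp C y1 h"
        "ccomp C p2 (ccomp C D (ccomp C y1 h)) = ccomp C y2 h"
        using D h p y eq by (simp_all add: comp_assoc id_comp)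
      moreover have "cdom C (ccomp C d h) = cdom C h" "ccod C (ccomp C d h) = P"
        "cdom C (ccomp C D (ccomp C y1 h)) = cdom C h" "ccod C (ccomp C D (ccomp C y1 h)) = P"
        using d D h y by simp_all
      ultimately show ?thesis by blast
    qed
    then have "ccomp C s h = ccomp C \<sigma> (ccomp C D (ccomp C y1 h))"
      unfolding s_def using comp_assoc[of h d \<sigma>] d h \<sigma>_dom by simp
    also have "\<dots> = ccomp C (ccomp C \<sigma> D) (ccomp C y1 h)"
      using comp_assoc[of "ccomp C y1 h" D \<sigma>] D h y \<sigma>_dom by simp
    finally show "zero_mor C (ccomp C s h)"
      using is_kernelD(1,2)[OF \<sigma>] zero_mor_precomp D h y by simp
  next
    assume "zero_mor C (ccomp C s h)"
    then have "zero_mor C (ccomp C \<sigma> (ccomp C d h))"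
      unfolding s_def using d h \<sigma>_dom by (simp add: comp_assoc)
    then obtain w where w: "ccod C w = Z" "ccomp C D w = ccomp C d h"
      using is_kernelD(3)[OF \<sigma>, of "ccomp C d h"] d h D \<sigma>_dom by auto
    have "ccomp C y1 h = ccomp C p1 (ccomp C D w)" "ccomp C y2 h = ccomp C p2 (ccomp C D w)"
      unfolding w(2) using d h p comp_assoc[of h d p1] comp_assoc[of h d p2] by simp_all
    moreover have "ccomp C p1 (ccomp C D w) = w" "ccomp C p2 (ccomp C D w) = w"
      using D p w comp_assoc[of w D p1] comp_assoc[of w D p2] id_comp by simp_all
    ultimately show "ccomp C y1 h = ccomp C y2 h" by simp
  qed
  obtain k where k: "is_kernel C k s" using kernel_exists ..
  show thesis
  proof (rule that)
    show "ccod C k = I" using is_kernelD(1)[OF k] s_dom by simp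
    show "Defs.mono C k" using kernel_is_mono[OF k] .
    show "ccomp C y1 k = ccomp C y2 k"
      using equalizes_iff is_kernelD(1,2)[OF k] s_dom by simp
    show "\<exists>u. ccod C u = cdom C k \<and> ccomp C k u = h"
      if "ccod C h = I" "ccomp C y1 h = ccomp C y2 h" for h
      using that equalizes_iff is_kernelD(3)[OF k, of h] s_dom by auto
  qed
qed

lemma kernel_of_cokernel_factors_through_mono:
  assumes q: "is_cokernel C q f" and m: "is_kernel C m q"
    and n: "Defs.mono C n" and f: "f = ccomp C n v" "ccod C v = cdom C n"
  obtains u where "ccod C u = cdom C n" "ccomp C n u = m"
proof -
  obtain g where g: "is_kernel C n g" using mono_is_kernel[OF n] ..
  have "ccomp C g f = ccomp C (ccomp C g n) v"
    using f comp_assoc[of v n g] is_kernelD(1)[OF g] by simp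
  then have "zero_mor C (ccomp C g f)"
    using f is_kernelD(1,2)[OF g] zero_mor_precomp by simp
  then obtain g' where g': "cdom C g' = ccod C q" "ccomp C g' q = g"
    using is_cokernelD(3)[OF q, of g] is_kernelD(1)[OF g] f by auto
  have "ccomp C g m = ccomp C g' (ccomp C q m)"
    using g' comp_assoc[of m q g'] is_kernelD(1)[OF m] by simp
  then have "zero_mor C (ccomp C g m)"
    using g' is_kernelD(1,2)[OF m] zero_mor_postcomp by simp
  moreover have "ccod C m = cdom C g"
    using is_kernelD(1)[OF m] is_cokernelD(1)[OF q] is_kernelD(1)[OF g] f by simp
  ultimately obtain u where "ccod C u = cdom C n" "ccomp C n u = m"
    using is_kernelD(3)[OF g, of m] by auto
  then show thesis by (rule that)
qed

lemma epi_onto_kernel_of_cokernel: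
  assumes q: "is_cokernel C q f" and m: "is_kernel C m q"
    and e: "ccod C e = cdom C m" "ccomp C m e = f"
  shows "epi C e"
  unfolding epi_def
proof (intro allI impI)
  fix y1 y2
  assume y: "cdom C y1 = ccod C e \<and> cdom C y2 = ccod C e \<and> ccod C y1 = ccod C y2 \<and>
    ccomp C y1 e = ccomp C y2 e"
  obtain k where k: "ccod C k = cdom C m" "Defs.mono C k" "ccomp C y1 k = ccomp C y2 k"
    and through_k: "\<And>h. ccod C h = cdom C m \<Longrightarrow> ccomp C y1 h = ccomp C y2 h \<Longrightarrow>
      \<exists>u. ccod C u = cdom C k \<and> ccomp C k u = h"
    by (rule equalizer_exists[of y1 "ccod C e" "ccod C y1" y2]) (use y e in auto)
  obtain v where v: "ccod C v = cdom C k" "ccomp C k v = e"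
    using through_k[of e] y e by auto
  have mk: "Defs.mono C (ccomp C m k)"
    using mono_comp kernel_is_mono[OF m] k by simp
  have "f = ccomp C (ccomp C m k) v"
    using e v k comp_assoc[of v k m] by simp
  then obtain u where u: "ccod C u = cdom C k" "ccomp C (ccomp C m k) u = m"
    using kernel_of_cokernel_factors_through_mono[OF q m mk] v k by auto
  have u_dom: "cdom C u = cdom C m"
    using dom_comp[of "ccomp C m k" u] u k by simp
  \<comment> \<open>Since the image is minimal, the equalizer of y1 and y2 is a split epi.\<close>
  have mku: "ccomp C m (ccomp C k u) = ccomp C m (cid C (cdom C m))"
    using u k comp_assoc[of u k m] comp_id by simp
  have ku: "ccomp C k u = cid C (cdom C m)"
    by (rule monoD[OF kernel_is_mono[OF m]]) (use u u_dom k mku in simp_all)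
  have "y1 = ccomp C (ccomp C y1 k) u"
    using ku y e k u comp_assoc[of u k y1] comp_id by simp
  also have "\<dots> = y2"
    using ku y e k u comp_assoc[of u k y2] comp_id by simp
  finally show "y1 = y2" .
qed

lemma image_factorization:
  assumes k: "is_kernel C k f" and q: "is_cokernel C q f"
  obtains e m where "short_exact C k e" "short_exact C m q"
    "cdom C e = cdom C f" "ccod C e = cdom C m"
proof -
  obtain m where m: "is_kernel C m q" using kernel_exists ..
  obtain e where e: "cdom C e = cdom C f" "ccod C e = cdom C m" "ccomp C m e = f"
    using is_kernelD(3)[OF m, of f] is_cokernelD(1,2)[OF q] by auto
  have "ccomp C m (ccomp C e k) = ccomp C f k"
    using e is_kernelD(1)[OF k] comp_assoc[of k e m] by simp
  then have "zero_mor C (ccomp C e k)"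
    using mono_cancel_zero_mor[OF kernel_is_mono[OF m]] e is_kernelD(1,2)[OF k] by simp
  then have ke: "is_kernel C k e"
    using is_kernel_of_first_factor[OF k e(3)[symmetric] e(2)] by simp
  have "is_cokernel C e k"
    using epi_is_cokernel_of_kernel[OF epi_onto_kernel_of_cokernel[OF q m e(2,3)] ke] .
  moreover have "is_cokernel C q m"
    using is_cokernel_of_second_factor[OF q e(3)[symmetric] e(2)] is_kernelD(2)[OF m] by simp
  ultimately show thesis
    using that ke m e unfolding short_exact_def by blast
qed

end

lemma amplitude_nonneg: "amplitude C \<alpha> \<Longrightarrow> 0 \<le> \<alpha> a"
  unfolding amplitude_def by blast

lemma amplitude_short_exact:
  assumes "amplitude C \<alpha>" "short_exact C f g"
  shows "\<alpha> (cdom C f) \<le> \<alpha> (cdom C g)" "\<alpha> (ccod C g) \<le> \<alpha> (cdom C g)"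
    "\<alpha> (cdom C g) \<le> \<alpha> (cdom C f) + \<alpha> (ccod C g)"
  using assms unfolding amplitude_def by blast+

lemma zz_cost_nonneg: "amplitude C \<alpha> \<Longrightarrow> 0 \<le> zz_cost C \<alpha> gs"
  unfolding zz_cost_def by (rule sum_list_nonneg) (auto simp: amplitude_nonneg)

lemma ereal_le_add_Inf:
  fixes a b :: ereal
  assumes b: "0 \<le> b" and S: "\<And>x. x \<in> S \<Longrightarrow> 0 \<le> x" "\<And>x. x \<in> S \<Longrightarrow> a \<le> b + x"
  shows "a \<le> b + Inf S"
proof (cases "S = {}")
  case True
  with b show ?thesis by (simp add: top_ereal_def)
next
  case False
  with b S(1) have "b + Inf S = (INF x\<in>S. b + x)"
    using INF_ereal_add_right[of S b "\<lambda>x. x"] by simp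
  with S(2) show ?thesis by (simp add: le_INF_iff)
qed

context abelian_cat
begin

lemma amplitude_along_morphism:
  assumes amp: "amplitude C \<alpha>"
  shows "\<alpha> (cdom C f) \<le> \<alpha> (ccod C f) + (\<alpha> (ker_obj C f) + \<alpha> (coker_obj C f))"
    and "\<alpha> (ccod C f) \<le> \<alpha> (cdom C f) + (\<alpha> (ker_obj C f) + \<alpha> (coker_obj C f))"
proof -
  define k where "k = (SOME k. is_kernel C k f)"
  define q where "q = (SOME q. is_cokernel C q f)"
  have k: "is_kernel C k f" unfolding k_def using kernel_exists by (rule someI_ex)
  have q: "is_cokernel C q f" unfolding q_def using cokernel_exists by (rule someI_ex)
  obtain e m where se: "short_exact C k e" "short_exact C m q"
    and e: "cdom C e = cdom C f" "ccod C e = cdom C m"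
    using image_factorization[OF k q] .
  have ker: "ker_obj C f = cdom C k" and coker: "coker_obj C f = ccod C q"
    unfolding ker_obj_def coker_obj_def k_def q_def by (rule refl)+
  have q_dom: "cdom C q = ccod C f" using is_cokernelD(1)[OF q] .
  note seq1 = amplitude_short_exact[OF amp se(1), unfolded e]
  note seq2 = amplitude_short_exact[OF amp se(2), unfolded q_dom]
  have "\<alpha> (cdom C f) \<le> \<alpha> (cdom C k) + \<alpha> (cdom C m)" by (fact seq1(3))
  also have "\<dots> \<le> \<alpha> (cdom C k) + \<alpha> (ccod C f)" using seq2(1) by (rule add_left_mono)
  also have "\<dots> = \<alpha> (ccod C f) + \<alpha> (cdom C k)" by (rule add.commute)
  also have "\<dots> \<le> \<alpha> (ccod C f) + (\<alpha> (cdom C k) + \<alpha> (ccod C q))"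
    using amplitude_nonneg[OF amp] by (intro add_left_mono add_increasing2) auto
  finally show "\<alpha> (cdom C f) \<le> \<alpha> (ccod C f) + (\<alpha> (ker_obj C f) + \<alpha> (coker_obj C f))"
    unfolding ker coker .
  have "\<alpha> (ccod C f) \<le> \<alpha> (cdom C m) + \<alpha> (ccod C q)" by (fact seq2(3))
  also have "\<dots> \<le> \<alpha> (cdom C f) + \<alpha> (ccod C q)" using seq1(2) by (rule add_right_mono)
  also have "\<dots> \<le> \<alpha> (cdom C f) + (\<alpha> (cdom C k) + \<alpha> (ccod C q))"
    using amplitude_nonneg[OF amp] by (intro add_left_mono add_increasing) auto
  finally show "\<alpha> (ccod C f) \<le> \<alpha> (cdom C f) + (\<alpha> (ker_obj C f) + \<alpha> (coker_obj C f))"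
    unfolding ker coker .
qed

lemma amplitude_along_zigzag:
  assumes amp: "amplitude C \<alpha>"
  shows "zigzag C A gs B \<Longrightarrow>
    \<alpha> A \<le> \<alpha> B + zz_cost C \<alpha> gs \<and> \<alpha> B \<le> \<alpha> A + zz_cost C \<alpha> gs"
proof (induction gs arbitrary: A)
  case Nil
  then show ?case by (simp add: zz_cost_def)
next
  case (Cons bg gs)
  obtain b g where bg: "bg = (b, g)" by fastforce
  define c where "c = \<alpha> (ker_obj C g) + \<alpha> (coker_obj C g)"
  have cost: "zz_cost C \<alpha> (bg # gs) = c + zz_cost C \<alpha> gs"
    unfolding zz_cost_def c_def bg by simp
  obtain X where X: "zigzag C X gs B" "\<alpha> A \<le> \<alpha> X + c" "\<alpha> X \<le> \<alpha> A + c"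
  proof (cases b)
    case True
    with Cons.prems bg show thesis
      using that amplitude_along_morphism[OF amp, of g] unfolding c_def by auto
  next
    case False
    with Cons.prems bg show thesis
      using that amplitude_along_morphism[OF amp, of g] unfolding c_def by auto
  qed
  note IH = Cons.IH[OF X(1)]
  have "\<alpha> A \<le> \<alpha> X + c" by (fact X(2))
  also have "\<dots> \<le> \<alpha> B + zz_cost C \<alpha> gs + c" using IH by (intro add_right_mono) simp
  finally have to_B: "\<alpha> A \<le> \<alpha> B + zz_cost C \<alpha> (bg # gs)" unfolding cost by (simp add: ac_simps)
  have "\<alpha> B \<le> \<alpha> X + zz_cost C \<alpha> gs" using IH by simp
  also have "\<dots> \<le> \<alpha> A + c + zz_cost C \<alpha> gs" using X(3) by (rule add_right_mono)
  finally have "\<alpha> B \<le> \<alpha> A + zz_cost C \<alpha> (bg # gs)" unfolding cost by (simp add: ac_simps)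
  with to_B show ?case ..
qed

end

theorem mainTheorem6:
  fixes C :: "('o, 'm) cat" and \<alpha> :: "'o \<Rightarrow> ereal" and A B :: 'o
  assumes "abelian_category C" and "amplitude C \<alpha>"
  shows "\<alpha> A \<le> \<alpha> B + path_dist C \<alpha> A B \<and> \<alpha> B \<le> \<alpha> A + path_dist C \<alpha> A B"
proof -
  interpret abelian_cat C by (fact abelian_cat.intro[OF assms(1)])
  let ?costs = "{zz_cost C \<alpha> gs | gs. zigzag C A gs B}"
  have costs_nonneg: "\<And>x. x \<in> ?costs \<Longrightarrow> 0 \<le> x"
    using zz_cost_nonneg[OF assms(2)] by blast
  have "\<alpha> A \<le> \<alpha> B + Inf ?costs"
    by (rule ereal_le_add_Inf[OF amplitude_nonneg[OF assms(2)] costs_nonneg])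
      (auto dest: amplitude_along_zigzag[OF assms(2)])
  moreover have "\<alpha> B \<le> \<alpha> A + Inf ?costs"
    by (rule ereal_le_add_Inf[OF amplitude_nonneg[OF assms(2)] costs_nonneg])
      (auto dest: amplitude_along_zigzag[OF assms(2)])
  ultimately show ?thesis unfolding path_dist_def ..
qed

end
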